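(* Under the hypotheses of the preceding theorem (theorem:ConvergenceRatesSparsityFull), if moreover $1<p\le2$, then $\|c^\alpha-c^\ast\|=\mathcal{O}(\sqrt{\delta+\epsilon})$ as $\delta+\epsilon\to0$.
   Context: The hypotheses are: sparsity setting with $X,Y,Z$ Hilbert spaces, $B:X\times Y\to Z$ bilinear with $\|B(c,s)\|\le C\|c\|\|s\|$ and sequentially weak-weak continuous, $P:Y\to Y_n\subset Y$ linear bounded ($Y_n$ finite-dimensional), $s_{\mathrm{calib}}\in Y_n$, $\mathcal{R}_s:Y\to[0,\infty)$ proper convex weakly lower semi-continuous, $\{\varphi_i\}$ an orthonormal basis of $X$, $1\le w_i<\infty$, $\Phi_p(c)=\sum_iw_i|\langle c,\varphi_i\rangle|^p$, fixed $\gamma>0$, $\nu_1,\nu_2>0$, $\tilde{\mathcal{R}}(c,s)=\Phi_p(c)+\frac{\nu_2}{2}\|P(s)-s_{\mathrm{calib}}\|^2+\nu_1\mathcal{R}_s(s)$, $J^{u,s_m}_{\alpha,\beta,\mu}(c,s)=\frac12\|B(c,s)-u\|^2+\frac{\gamma}{2}\|s-s_m\|^2+\frac{\mu}{2}\|P(s)-s_{\mathrm{calib}}\|^2+\alpha\Phi_p(c)+\beta\mathcal{R}_s(s)$; $u^\ast=B(c^\ast,s^\ast)$ with $c^\ast\in\arg\min\{\Phi_p(c):B(c,s^\ast)=u^\ast\}$; $\|u^\ast-u_\delta\|\le\delta$, $\|s^\ast-s_{\mathrm{mod},\epsilon}\|\le\epsilon$; there exist $\kappa_1\in[0,1)$,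 $\kappa_2\ge0$, $0\le\kappa_3<\min\{1,\gamma/(2\alpha_{\max})\}$, $\xi^\ast\in\partial\tilde{\mathcal{R}}(c^\ast,s^\ast)$ with $\langle\xi^\ast,(c^\ast-c,s^\ast-s)\rangle\le\kappa_1D^{\xi^\ast}_{\tilde{\mathcal{R}}}((c,s),(c^\ast,s^\ast))+\kappa_2\|B(c,s)-B(c^\ast,s^\ast)\|+\kappa_3\|s-s^\ast\|^2$ for all $(c,s)$, where $D^{\xi}_{\mathcal{R}}(x,x^\ast)=\mathcal{R}(x)-\mathcal{R}(x^\ast)-\langle\xi,x-x^\ast\rangle$; $(c^\alpha,s^\alpha)$ minimizes $J^{u_\delta,s_{\mathrm{mod},\epsilon}}_{\alpha,\nu_1\alpha,\nu_2\alpha}$, $0<\alpha\le\alpha_{\max}$, and $m(\delta+\epsilon)\le\alpha\le M(\delta+\epsilon)$ for constants $0<m\le M$. *)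

theory Defs
  imports "HOL-Analysis.Analysis" "HOL-Library.Liminf_Limsup"
begin

definition weak_conv :: "(nat \<Rightarrow> 'a::real_inner) \<Rightarrow> 'a \<Rightarrow> bool" where
  "weak_conv xs x \<longleftrightarrow> (\<forall>v. (\<lambda>n. xs n \<bullet> v) \<longlonglongrightarrow> x \<bullet> v)"

definition seq_weak_weak_cont2 :: "('a::real_inner \<Rightarrow> 'b::real_inner \<Rightarrow> 'c::real_inner) \<Rightarrow> bool" where
  "seq_weak_weak_cont2 B \<longleftrightarrow>
     (\<forall>cs c ss s. weak_conv cs c \<longrightarrow> weak_conv ss s \<longrightarrow>
        weak_conv (\<lambda>n. B (cs n) (ss n)) (B c s))"

definition weakly_lsc :: "('a::real_inner \<Rightarrow> real) \<Rightarrow> bool" where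
  "weakly_lsc R \<longleftrightarrow> (\<forall>xs x. weak_conv xs x \<longrightarrow> ereal (R x) \<le> liminf (\<lambda>n. ereal (R (xs n))))"

definition orthonormal_basis :: "('i \<Rightarrow> 'a::real_inner) \<Rightarrow> bool" where
  "orthonormal_basis \<phi> \<longleftrightarrow>
     (\<forall>i j. \<phi> i \<bullet> \<phi> j = (if i = j then 1 else 0)) \<and> closure (span (range \<phi>)) = UNIV"

definition Phi_p :: "real \<Rightarrow> ('i \<Rightarrow> real) \<Rightarrow> ('i \<Rightarrow> 'a::real_inner) \<Rightarrow> 'a \<Rightarrow> ereal" where
  "Phi_p p w \<phi> c =
     (if (\<lambda>i. w i * \<bar>c \<bullet> \<phi> i\<bar> powr p) summable_on UNIV
      then ereal (\<Sum>\<^sub>\<infinity>i. w i * \<bar>c \<bullet> \<phi> i\<bar> powr p) else \<infinity>)"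

definition subgradient :: "('a::real_inner \<Rightarrow> ereal) \<Rightarrow> 'a \<Rightarrow> 'a \<Rightarrow> bool" where
  "subgradient R x0 \<xi> \<longleftrightarrow> \<bar>R x0\<bar> \<noteq> \<infinity> \<and> (\<forall>x. R x0 + ereal (\<xi> \<bullet> (x - x0)) \<le> R x)"

definition bregman :: "('a::real_inner \<Rightarrow> ereal) \<Rightarrow> 'a \<Rightarrow> 'a \<Rightarrow> 'a \<Rightarrow> ereal" where
  "bregman R \<xi> x x0 = R x - R x0 - ereal (\<xi> \<bullet> (x - x0))"

definition R_tilde ::
  "real \<Rightarrow> ('i \<Rightarrow> real) \<Rightarrow> ('i \<Rightarrow> 'x::real_inner) \<Rightarrow> real \<Rightarrow> real \<Rightarrow> ('y::real_inner \<Rightarrow> 'y)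
     \<Rightarrow> 'y \<Rightarrow> ('y \<Rightarrow> real) \<Rightarrow> 'x \<times> 'y \<Rightarrow> ereal" where
  "R_tilde p w \<phi> \<nu>1 \<nu>2 P s_calib R_s cs =
     Phi_p p w \<phi> (fst cs) + ereal (\<nu>2 / 2 * (norm (P (snd cs) - s_calib))\<^sup>2 + \<nu>1 * R_s (snd cs))"

definition J_fun ::
  "('x::real_inner \<Rightarrow> 'y::real_inner \<Rightarrow> 'z::real_inner) \<Rightarrow> real \<Rightarrow> ('y \<Rightarrow> 'y) \<Rightarrow> 'y
     \<Rightarrow> real \<Rightarrow> ('i \<Rightarrow> real) \<Rightarrow> ('i \<Rightarrow> 'x) \<Rightarrow> ('y \<Rightarrow> real)
     \<Rightarrow> 'z \<Rightarrow> 'y \<Rightarrow> real \<Rightarrow> real \<Rightarrow> real \<Rightarrow> 'x \<Rightarrow> 'y \<Rightarrow> ereal" where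
  "J_fun B \<gamma> P s_calib p w \<phi> R_s u s_m \<alpha> \<beta> \<mu> c s =
     ereal (1/2 * (norm (B c s - u))\<^sup>2 + \<gamma> / 2 * (norm (s - s_m))\<^sup>2
            + \<mu> / 2 * (norm (P s - s_calib))\<^sup>2)
     + ereal \<alpha> * Phi_p p w \<phi> c + ereal (\<beta> * R_s s)"

end

theory Submission
  imports Defs
begin

text \<open>For \<open>1 < p \<le> 2\<close> the function \<open>\<bar>t\<bar> powr p\<close> is uniformly convex on bounded intervals, so on
  sets of vectors with uniformly bounded coefficients the Bregman distance of \<open>\<Phi>\<^sub>p\<close> dominates a
  multiple of the squared distance (test the subgradient inequality at the midpoint). The
  regularized solutions have \<open>\<Phi>\<^sub>p(c\<^sup>\<alpha>)\<close> bounded uniformly in the data, hence uniformly bounded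
  coefficients, and the variational source condition gives the rate \<open>O(\<delta> + \<epsilon>)\<close> for the
  Bregman distance of \<open>R\<^sup>~\<close>. Taking square roots yields the claim.

  The hypotheses on \<open>B\<close>, \<open>P\<close>, \<open>Y\<^sub>n\<close>, the convexity and lower semicontinuity of \<open>R\<^sub>s\<close> and the
  minimality of \<open>c\<^sup>*\<close> serve the existence of minimizers; the statement presupposes a minimizer,
  so the proof does not use them.\<close>

definition midpoint_gap_const :: "real \<Rightarrow> real \<Rightarrow> real" where
  "midpoint_gap_const p R = min (1 - 2 powr (1 - p)) (p * (p - 1)) * (R + 1) powr (p - 2) / 4"

lemma midpoint_gap_const_pos:
  assumes "1 < p" "0 \<le> R"
  shows "0 < midpoint_gap_const p R"
proof -
  have "2 powr (1 - p) < 2 powr 0" using assms by (intro powr_less_mono) auto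
  then show ?thesis using assms by (simp add: midpoint_gap_const_def)
qed

text \<open>On \<open>(0, R + 1)\<close> the function \<open>t powr p - (m/2) t\<^sup>2\<close> with \<open>m = p(p-1)(R+1) powr (p-2)\<close>
  is convex, since \<open>p \<le> 2\<close> makes the second derivative of \<open>t powr p\<close> decreasing.\<close>
lemma powr_midpoint_gap_pos:
  fixes a b p R :: real
  assumes p: "1 < p" "p \<le> 2" and a: "0 < a" "a \<le> R" and b: "0 < b" "b \<le> R"
  shows "p * (p - 1) * (R + 1) powr (p - 2) / 4 * (a - b)\<^sup>2 \<le> a powr p + b powr p - 2 * ((a + b) / 2) powr p"
proof -
  define m where "m = p * (p - 1) * (R + 1) powr (p - 2)"
  define I where "I = {0<..<R + 1}"
  define g where "g t = t powr p - m / 2 * t\<^sup>2" for t :: real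
  have convex: "convex_on I g"
  proof (rule f''_ge0_imp_convex[where f' = "\<lambda>t. p * t powr (p - 1) - m * t"
        and f'' = "\<lambda>t. p * (p - 1) * t powr (p - 2) - m"])
    show "convex I" unfolding I_def by simp
    fix x assume "x \<in> I"
    then have x: "0 < x" "x < R + 1" by (auto simp: I_def)
    show "DERIV g x :> p * x powr (p - 1) - m * x" unfolding g_def
      using x by (auto intro!: derivative_eq_intros simp: power2_eq_square)
    show "DERIV (\<lambda>t. p * t powr (p - 1) - m * t) x :> p * (p - 1) * x powr (p - 2) - m"
      using x by (auto intro!: derivative_eq_intros simp: algebra_simps)
    have "(R + 1) powr (p - 2) \<le> x powr (p - 2)" using x p by (intro powr_mono2') auto
    then show "0 \<le> p * (p - 1) * x powr (p - 2) - m" unfolding m_def using p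
      by (simp add: mult_left_mono)
  qed
  have "a \<in> I" "b \<in> I" using a b by (auto simp: I_def)
  then have "g ((1/2) *\<^sub>R a + (1 - 1/2) *\<^sub>R b) \<le> (1/2) * g a + (1 - 1/2) * g b"
    using convex_onD[OF convex, of "1/2" a b] by simp
  then have "g ((a + b) / 2) \<le> (g a + g b) / 2" by (simp add: add_divide_distrib)
  moreover have "m / 4 * (a - b)\<^sup>2 = m / 2 * a\<^sup>2 + m / 2 * b\<^sup>2 - 2 * (m / 2 * ((a + b) / 2)\<^sup>2)"
    by (simp add: power2_eq_square field_simps)
  ultimately show ?thesis unfolding g_def m_def by (simp add: field_simps)
qed

text \<open>For opposite signs the midpoint has at most half the larger modulus \<open>s\<close>, so the gap is at
  least \<open>(1 - 2 powr (1 - p)) s powr p\<close>.\<close>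
lemma abs_powr_midpoint_gap_opposite_sign:
  fixes a b p R :: real
  assumes p: "1 < p" "p \<le> 2" and a: "\<bar>a\<bar> \<le> R" and b: "\<bar>b\<bar> \<le> R" and ab: "a * b \<le> 0"
  shows "(1 - 2 powr (1 - p)) * (R + 1) powr (p - 2) / 4 * (a - b)\<^sup>2
     \<le> \<bar>a\<bar> powr p + \<bar>b\<bar> powr p - 2 * \<bar>(a + b) / 2\<bar> powr p"
proof -
  define s where "s = max \<bar>a\<bar> \<bar>b\<bar>"
  have s: "0 \<le> s" "s \<le> R" using a b by (auto simp: s_def)
  have c0: "0 \<le> 1 - 2 powr (1 - p)"
    using powr_mono[of "1 - p" 0 2] p by simp
  have "\<bar>a + b\<bar> \<le> s" using ab unfolding s_def
    using mult_pos_pos[of a b] mult_neg_neg[of a b] by (smt (verit))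
  then have "\<bar>(a + b) / 2\<bar> powr p \<le> (s / 2) powr p" using p by (intro powr_mono2) auto
  also have "\<dots> = s powr p / 2 powr p" using s by (simp add: powr_divide)
  finally have mid: "2 * \<bar>(a + b) / 2\<bar> powr p \<le> 2 powr (1 - p) * s powr p"
    by (simp add: powr_diff)
  have max: "s powr p \<le> \<bar>a\<bar> powr p + \<bar>b\<bar> powr p"
    unfolding s_def by (cases "\<bar>a\<bar> \<le> \<bar>b\<bar>") (auto simp: max_def)
  have "\<bar>a - b\<bar> \<le> 2 * s" unfolding s_def by linarith
  then have "\<bar>a - b\<bar>\<^sup>2 \<le> (2 * s)\<^sup>2" by (intro power_mono) auto
  then have diff: "(a - b)\<^sup>2 \<le> 4 * s\<^sup>2" by (simp add: power_mult_distrib)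
  have sq: "s\<^sup>2 * (R + 1) powr (p - 2) \<le> s powr p"
  proof (cases "s = 0")
    case False
    then have "0 < s" using s by simp
    then have "s\<^sup>2 * (R + 1) powr (p - 2) \<le> s powr 2 * s powr (p - 2)"
      using s p by (auto simp: powr_numeral intro!: mult_left_mono powr_mono2')
    also have "\<dots> = s powr p" using powr_add[of s 2 "p - 2"] \<open>0 < s\<close> by simp
    finally show ?thesis .
  qed (use p in simp)
  have "(1 - 2 powr (1 - p)) * (R + 1) powr (p - 2) / 4 * (a - b)\<^sup>2
     \<le> (1 - 2 powr (1 - p)) * (R + 1) powr (p - 2) / 4 * (4 * s\<^sup>2)"
    using diff c0 by (intro mult_left_mono) auto
  also have "\<dots> = (1 - 2 powr (1 - p)) * (s\<^sup>2 * (R + 1) powr (p - 2))" by simp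
  also have "\<dots> \<le> (1 - 2 powr (1 - p)) * s powr p" using sq c0 by (intro mult_left_mono)
  finally show ?thesis using mid max by (simp add: algebra_simps)
qed

lemma abs_powr_midpoint_gap:
  fixes a b p R :: real
  assumes p: "1 < p" "p \<le> 2" and a: "\<bar>a\<bar> \<le> R" and b: "\<bar>b\<bar> \<le> R"
  shows "midpoint_gap_const p R * (a - b)\<^sup>2 \<le> \<bar>a\<bar> powr p + \<bar>b\<bar> powr p - 2 * \<bar>(a + b) / 2\<bar> powr p"
proof -
  have weaken: "midpoint_gap_const p R * (a - b)\<^sup>2 \<le> c * (R + 1) powr (p - 2) / 4 * (a - b)\<^sup>2"
    if "min (1 - 2 powr (1 - p)) (p * (p - 1)) \<le> c" for c
    unfolding midpoint_gap_const_def using that by (intro mult_right_mono divide_right_mono) auto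
  consider "a * b \<le> 0" | "0 < a" "0 < b" | "a < 0" "b < 0"
    by (meson not_le zero_less_mult_iff)
  then show ?thesis
  proof cases
    case 1
    then show ?thesis
      using weaken[of "1 - 2 powr (1 - p)"] abs_powr_midpoint_gap_opposite_sign[OF p a b] by simp
  next
    case 2
    then show ?thesis
      using weaken[of "p * (p - 1)"] powr_midpoint_gap_pos[OF p, of a R b] a b by simp
  next
    case 3
    have "(a - b)\<^sup>2 = (- a - - b)\<^sup>2" by (simp add: power2_commute)
    then show ?thesis
      using 3 weaken[of "p * (p - 1)"] powr_midpoint_gap_pos[OF p, of "- a" R "- b"] a b
      by (simp add: minus_divide_left[symmetric])
  qed
qed

lemma orthonormal_expansion_residual:
  fixes \<phi> :: "'i \<Rightarrow> 'a::real_inner" and v :: 'a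
  assumes orthonormal: "\<And>i j. \<phi> i \<bullet> \<phi> j = (if i = j then 1 else 0)" and F: "finite F"
  defines "v\<^sub>F \<equiv> (\<Sum>i\<in>F. (v \<bullet> \<phi> i) *\<^sub>R \<phi> i)"
  shows "\<And>j. j \<in> F \<Longrightarrow> (v - v\<^sub>F) \<bullet> \<phi> j = 0"
    and "(norm v)\<^sup>2 = (norm (v - v\<^sub>F))\<^sup>2 + (\<Sum>i\<in>F. (v \<bullet> \<phi> i)\<^sup>2)"
proof -
  have coeff: "v\<^sub>F \<bullet> \<phi> j = (if j \<in> F then v \<bullet> \<phi> j else 0)" for j
    unfolding v\<^sub>F_def using F by (simp add: inner_sum_left orthonormal if_distrib cong: if_cong)
  show "(v - v\<^sub>F) \<bullet> \<phi> j = 0" if "j \<in> F" for j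
    using coeff[of j] that by (simp add: inner_diff_left)
  have "v\<^sub>F \<bullet> v\<^sub>F = (\<Sum>i\<in>F. (v \<bullet> \<phi> i)\<^sup>2)"
    by (subst (2) v\<^sub>F_def) (simp add: inner_sum_right coeff power2_eq_square)
  moreover have "v \<bullet> v\<^sub>F = (\<Sum>i\<in>F. (v \<bullet> \<phi> i)\<^sup>2)"
    unfolding v\<^sub>F_def by (simp add: inner_sum_right power2_eq_square)
  ultimately show "(norm v)\<^sup>2 = (norm (v - v\<^sub>F))\<^sup>2 + (\<Sum>i\<in>F. (v \<bullet> \<phi> i)\<^sup>2)"
    unfolding power2_norm_eq_inner by (simp add: inner_diff_left inner_diff_right inner_commute)
qed

lemma orthonormal_basis_coeffs_sq_summable:
  assumes "orthonormal_basis \<phi>"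
  shows "(\<lambda>i. (v \<bullet> \<phi> i)\<^sup>2) summable_on UNIV"
proof (rule nonneg_bdd_above_summable_on)
  show "bdd_above (sum (\<lambda>i. (v \<bullet> \<phi> i)\<^sup>2) ` {F. F \<subseteq> UNIV \<and> finite F})"
    using orthonormal_expansion_residual(2)[of \<phi> _ v] assms
    by (intro bdd_aboveI[where M = "(norm v)\<^sup>2"]) (force simp: orthonormal_basis_def)
qed simp

text \<open>The half of Parseval's identity that uses completeness of the basis: the residual of
  \<open>v\<close> after projecting onto finitely many basis vectors is no longer than its distance to any
  vector of their span, and such vectors come arbitrarily close to \<open>v\<close>.\<close>
lemma norm_sq_le_infsum_orthonormal_coeffs:
  fixes \<phi> :: "'i \<Rightarrow> 'a::real_inner"
  assumes onb: "orthonormal_basis \<phi>"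
  shows "(norm v)\<^sup>2 \<le> (\<Sum>\<^sub>\<infinity>i. (v \<bullet> \<phi> i)\<^sup>2)"
proof (rule field_le_epsilon)
  fix e :: real assume "0 < e"
  have orthonormal: "\<And>i j. \<phi> i \<bullet> \<phi> j = (if i = j then 1 else 0)"
    and dense: "closure (span (range \<phi>)) = UNIV"
    using onb unfolding orthonormal_basis_def by auto
  have "v \<in> closure (span (range \<phi>))" using dense by simp
  then obtain u where u: "u \<in> span (range \<phi>)" and "dist u v < sqrt e"
    using \<open>0 < e\<close> unfolding closure_approachable by (meson real_sqrt_gt_zero)
  then have uv: "(norm (v - u))\<^sup>2 \<le> e"
    using \<open>0 < e\<close> real_sqrt_less_iff[of "(norm (v - u))\<^sup>2" e]
    by (simp add: dist_norm norm_minus_commute)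
  obtain t r where t: "finite t" "t \<subseteq> range \<phi>" and u_eq: "u = (\<Sum>a\<in>t. r a *\<^sub>R a)"
    using u unfolding span_explicit by blast
  obtain F where F: "finite F" "t = \<phi> ` F"
    using finite_subset_image[OF t] by blast
  define v\<^sub>F where "v\<^sub>F = (\<Sum>i\<in>F. (v \<bullet> \<phi> i) *\<^sub>R \<phi> i)"
  have residual_orth: "(v - v\<^sub>F) \<bullet> \<phi> j = 0" if "j \<in> F" for j
    using orthonormal_expansion_residual(1)[OF orthonormal F(1) that] unfolding v\<^sub>F_def .
  have "(v - v\<^sub>F) \<bullet> u = 0"
    unfolding u_eq using F residual_orth by (auto simp: inner_sum_right intro!: sum.neutral)
  moreover have "(v - v\<^sub>F) \<bullet> v\<^sub>F = 0"
    using residual_orth by (subst (2) v\<^sub>F_def) (auto simp: inner_sum_right intro!: sum.neutral)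
  ultimately have "orthogonal (v - v\<^sub>F) (v\<^sub>F - u)"
    by (simp add: orthogonal_def inner_diff_right)
  then have "(norm (v - u))\<^sup>2 = (norm (v - v\<^sub>F))\<^sup>2 + (norm (v\<^sub>F - u))\<^sup>2"
    using norm_add_Pythagorean[of "v - v\<^sub>F" "v\<^sub>F - u"] by simp
  then have "(norm (v - v\<^sub>F))\<^sup>2 \<le> e" using uv zero_le_power2[of "norm (v\<^sub>F - u)"] by linarith
  moreover have "(\<Sum>i\<in>F. (v \<bullet> \<phi> i)\<^sup>2) \<le> (\<Sum>\<^sub>\<infinity>i. (v \<bullet> \<phi> i)\<^sup>2)"
    using orthonormal_basis_coeffs_sq_summable[OF onb] F(1) by (intro finite_sum_le_infsum) auto
  ultimately show "(norm v)\<^sup>2 \<le> (\<Sum>\<^sub>\<infinity>i. (v \<bullet> \<phi> i)\<^sup>2) + e"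
    using orthonormal_expansion_residual(2)[OF orthonormal F(1), of v] unfolding v\<^sub>F_def by linarith
qed

abbreviation Phi_terms :: "real \<Rightarrow> ('i \<Rightarrow> real) \<Rightarrow> ('i \<Rightarrow> 'a::real_inner) \<Rightarrow> 'a \<Rightarrow> 'i \<Rightarrow> real" where
  "Phi_terms p w \<phi> c \<equiv> \<lambda>i. w i * \<bar>c \<bullet> \<phi> i\<bar> powr p"

lemma Phi_p_eq_infsum:
  "Phi_terms p w \<phi> c summable_on UNIV \<Longrightarrow> Phi_p p w \<phi> c = ereal (infsum (Phi_terms p w \<phi> c) UNIV)"
  by (simp add: Phi_p_def)

lemma Phi_p_finiteD:
  assumes "Phi_p p w \<phi> c \<noteq> \<infinity>"
  shows "Phi_terms p w \<phi> c summable_on UNIV"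
  using assms by (auto simp: Phi_p_def split: if_splits)

lemma Phi_p_nonneg:
  assumes "\<And>i. 0 \<le> w i"
  shows "0 \<le> Phi_p p w \<phi> c"
  using assms by (auto simp: Phi_p_def intro!: infsum_nonneg)

lemma abs_coeff_le_Phi_p:
  assumes sum: "Phi_terms p w \<phi> c summable_on UNIV" and w: "\<And>i. 1 \<le> w i" and p: "1 \<le> p"
  shows "\<bar>c \<bullet> \<phi> j\<bar> \<le> max 1 (infsum (Phi_terms p w \<phi> c) UNIV)"
proof -
  have w0: "0 \<le> w i" for i using w[of i] by linarith
  have "\<bar>c \<bullet> \<phi> j\<bar> powr p \<le> w j * \<bar>c \<bullet> \<phi> j\<bar> powr p"
    using w[of j] by (intro mult_le_cancel_right1[THEN iffD2]) auto
  also have "\<dots> = (\<Sum>i\<in>{j}. Phi_terms p w \<phi> c i)" by simp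
  also have "\<dots> \<le> infsum (Phi_terms p w \<phi> c) UNIV"
    using sum w0 by (intro finite_sum_le_infsum) auto
  finally have "\<bar>c \<bullet> \<phi> j\<bar> powr p \<le> infsum (Phi_terms p w \<phi> c) UNIV" .
  moreover have "\<bar>c \<bullet> \<phi> j\<bar> \<le> max 1 (\<bar>c \<bullet> \<phi> j\<bar> powr p)"
  proof (cases "\<bar>c \<bullet> \<phi> j\<bar> \<le> 1")
    case False
    then have "\<bar>c \<bullet> \<phi> j\<bar> powr 1 \<le> \<bar>c \<bullet> \<phi> j\<bar> powr p" using p by (intro powr_mono) auto
    then show ?thesis using False by simp
  qed simp
  ultimately show ?thesis by linarith
qed

text \<open>Uniform convexity of \<open>\<Phi>\<^sub>p\<close> on sets with bounded coefficients: sum the coefficientwise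
  gaps and use that the coefficients capture the whole norm.\<close>
lemma Phi_p_midpoint_gap:
  fixes a b :: "'a::real_inner"
  assumes onb: "orthonormal_basis \<phi>" and w: "\<And>i. 1 \<le> w i" and p: "1 < p" "p \<le> 2"
    and sum_a: "Phi_terms p w \<phi> a summable_on UNIV" and sum_b: "Phi_terms p w \<phi> b summable_on UNIV"
    and a: "\<And>i. \<bar>a \<bullet> \<phi> i\<bar> \<le> R" and b: "\<And>i. \<bar>b \<bullet> \<phi> i\<bar> \<le> R"
  defines "mid \<equiv> (1/2) *\<^sub>R (a + b)"
  shows "Phi_terms p w \<phi> mid summable_on UNIV"
    and "midpoint_gap_const p R * (norm (a - b))\<^sup>2
           \<le> infsum (Phi_terms p w \<phi> a) UNIV + infsum (Phi_terms p w \<phi> b) UNIV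
              - 2 * infsum (Phi_terms p w \<phi> mid) UNIV"
proof -
  define k where "k = midpoint_gap_const p R"
  define gap where "gap i = \<bar>a \<bullet> \<phi> i\<bar> powr p + \<bar>b \<bullet> \<phi> i\<bar> powr p - 2 * \<bar>mid \<bullet> \<phi> i\<bar> powr p" for i
  have R: "0 \<le> R" using a[of undefined] by linarith
  have w0: "0 \<le> w i" for i using w[of i] by linarith
  have coeff_gap: "k * ((a - b) \<bullet> \<phi> i)\<^sup>2 \<le> gap i" for i
    using abs_powr_midpoint_gap[OF p a b, of i i]
    by (simp add: k_def gap_def mid_def inner_diff_left inner_add_left)
  have gap0: "0 \<le> gap i" for i
    using coeff_gap[of i] midpoint_gap_const_pos[OF p(1) R] unfolding k_def
    by (smt (verit) zero_le_power2 mult_nonneg_nonneg)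
  have Phi_gap: "w i * gap i = Phi_terms p w \<phi> a i + Phi_terms p w \<phi> b i - 2 * Phi_terms p w \<phi> mid i" for i
    by (simp add: gap_def algebra_simps)
  show sum_mid: "Phi_terms p w \<phi> mid summable_on UNIV"
  proof (rule summable_on_comparison_test)
    show "(\<lambda>i. (1/2) * (Phi_terms p w \<phi> a i + Phi_terms p w \<phi> b i)) summable_on UNIV"
      by (intro summable_on_cmult_right summable_on_add sum_a sum_b)
    show "Phi_terms p w \<phi> mid i \<le> (1/2) * (Phi_terms p w \<phi> a i + Phi_terms p w \<phi> b i)" for i
      using Phi_gap[of i] mult_nonneg_nonneg[OF w0[of i] gap0[of i]] by simp
  qed (simp add: w0)
  have "k * (norm (a - b))\<^sup>2 \<le> k * (\<Sum>\<^sub>\<infinity>i. ((a - b) \<bullet> \<phi> i)\<^sup>2)"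
    using norm_sq_le_infsum_orthonormal_coeffs[OF onb] midpoint_gap_const_pos[OF p(1) R]
    unfolding k_def by (intro mult_left_mono) auto
  also have "\<dots> \<le> infsum (Phi_terms p w \<phi> a) UNIV + infsum (Phi_terms p w \<phi> b) UNIV
                   + (- 2) * infsum (Phi_terms p w \<phi> mid) UNIV"
  proof (rule has_sum_mono)
    show "((\<lambda>i. k * ((a - b) \<bullet> \<phi> i)\<^sup>2) has_sum k * (\<Sum>\<^sub>\<infinity>i. ((a - b) \<bullet> \<phi> i)\<^sup>2)) UNIV"
      by (intro has_sum_cmult_right has_sum_infsum orthonormal_basis_coeffs_sq_summable[OF onb])
    show "((\<lambda>i. Phi_terms p w \<phi> a i + Phi_terms p w \<phi> b i + (- 2) * Phi_terms p w \<phi> mid i) has_sum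
        infsum (Phi_terms p w \<phi> a) UNIV + infsum (Phi_terms p w \<phi> b) UNIV
          + (- 2) * infsum (Phi_terms p w \<phi> mid) UNIV) UNIV"
      by (intro has_sum_add has_sum_cmult_right has_sum_infsum sum_a sum_b sum_mid)
    show "k * ((a - b) \<bullet> \<phi> i)\<^sup>2 \<le> Phi_terms p w \<phi> a i + Phi_terms p w \<phi> b i + (- 2) * Phi_terms p w \<phi> mid i" for i
      using coeff_gap[of i] mult_right_mono[OF w[of i] gap0[of i]] Phi_gap[of i] by simp
  qed
  finally show "k * (norm (a - b))\<^sup>2 \<le> infsum (Phi_terms p w \<phi> a) UNIV + infsum (Phi_terms p w \<phi> b) UNIV
              - 2 * infsum (Phi_terms p w \<phi> mid) UNIV" by simp
qed

text \<open>Testing the subgradient inequality at the midpoint converts the midpoint gap into a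
  lower bound for the Bregman distance.\<close>
lemma Phi_p_bregman_lower_bound:
  fixes a b :: "'a::real_inner"
  assumes onb: "orthonormal_basis \<phi>" and w: "\<And>i. 1 \<le> w i" and p: "1 < p" "p \<le> 2"
    and sum_a: "Phi_terms p w \<phi> a summable_on UNIV" and sum_b: "Phi_terms p w \<phi> b summable_on UNIV"
    and a: "\<And>i. \<bar>a \<bullet> \<phi> i\<bar> \<le> R" and b: "\<And>i. \<bar>b \<bullet> \<phi> i\<bar> \<le> R"
    and subgrad: "\<And>c. ereal (infsum (Phi_terms p w \<phi> b) UNIV + \<xi> \<bullet> (c - b)) \<le> Phi_p p w \<phi> c"
  shows "midpoint_gap_const p R * (norm (a - b))\<^sup>2
           \<le> infsum (Phi_terms p w \<phi> a) UNIV - infsum (Phi_terms p w \<phi> b) UNIV - \<xi> \<bullet> (a - b)"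
proof -
  define mid where "mid = (1/2) *\<^sub>R (a + b)"
  note gap = Phi_p_midpoint_gap[OF onb w p sum_a sum_b a b, folded mid_def]
  have "ereal (infsum (Phi_terms p w \<phi> b) UNIV + \<xi> \<bullet> (mid - b)) \<le> ereal (infsum (Phi_terms p w \<phi> mid) UNIV)"
    using subgrad[of mid] Phi_p_eq_infsum[OF gap(1)] by simp
  moreover have "\<xi> \<bullet> (mid - b) = \<xi> \<bullet> (a - b) / 2"
    by (simp add: mid_def inner_diff_right inner_add_right algebra_simps)
  ultimately show ?thesis using gap(2) by simp
qed

abbreviation R_tilde_s :: "real \<Rightarrow> real \<Rightarrow> ('y::real_inner \<Rightarrow> 'y) \<Rightarrow> 'y \<Rightarrow> ('y \<Rightarrow> real) \<Rightarrow> 'y \<Rightarrow> real" where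
  "R_tilde_s \<nu>1 \<nu>2 P s_calib R_s s \<equiv> \<nu>2 / 2 * (norm (P s - s_calib))\<^sup>2 + \<nu>1 * R_s s"

lemma subgradient_R_tilde_D:
  assumes w: "\<And>i. 0 \<le> w i"
    and sg: "subgradient (R_tilde p w \<phi> \<nu>1 \<nu>2 P s_calib R_s) (c0, s0) (\<xi>c, \<xi>s)"
  shows "Phi_terms p w \<phi> c0 summable_on UNIV"
    and "\<And>c. ereal (infsum (Phi_terms p w \<phi> c0) UNIV + \<xi>c \<bullet> (c - c0)) \<le> Phi_p p w \<phi> c"
    and "\<And>s. \<xi>s \<bullet> (s - s0) \<le> R_tilde_s \<nu>1 \<nu>2 P s_calib R_s s - R_tilde_s \<nu>1 \<nu>2 P s_calib R_s s0"
proof -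
  have finite: "\<bar>Phi_p p w \<phi> c0 + ereal (R_tilde_s \<nu>1 \<nu>2 P s_calib R_s s0)\<bar> \<noteq> \<infinity>"
    and ineq: "\<And>c s. Phi_p p w \<phi> c0 + ereal (R_tilde_s \<nu>1 \<nu>2 P s_calib R_s s0)
                      + ereal (\<xi>c \<bullet> (c - c0) + \<xi>s \<bullet> (s - s0))
                    \<le> Phi_p p w \<phi> c + ereal (R_tilde_s \<nu>1 \<nu>2 P s_calib R_s s)"
  proof -
    show "\<bar>Phi_p p w \<phi> c0 + ereal (R_tilde_s \<nu>1 \<nu>2 P s_calib R_s s0)\<bar> \<noteq> \<infinity>"
      using sg by (simp add: subgradient_def R_tilde_def)
    fix c s
    have "R_tilde p w \<phi> \<nu>1 \<nu>2 P s_calib R_s (c0, s0) + ereal ((\<xi>c, \<xi>s) \<bullet> ((c, s) - (c0, s0)))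
        \<le> R_tilde p w \<phi> \<nu>1 \<nu>2 P s_calib R_s (c, s)"
      using sg unfolding subgradient_def by blast
    then show "Phi_p p w \<phi> c0 + ereal (R_tilde_s \<nu>1 \<nu>2 P s_calib R_s s0)
                      + ereal (\<xi>c \<bullet> (c - c0) + \<xi>s \<bullet> (s - s0))
                    \<le> Phi_p p w \<phi> c + ereal (R_tilde_s \<nu>1 \<nu>2 P s_calib R_s s)"
      by (simp add: R_tilde_def)
  qed
  show sum: "Phi_terms p w \<phi> c0 summable_on UNIV"
    using finite by (intro Phi_p_finiteD) auto
  note Phi_c0 = Phi_p_eq_infsum[OF sum]
  show "ereal (infsum (Phi_terms p w \<phi> c0) UNIV + \<xi>c \<bullet> (c - c0)) \<le> Phi_p p w \<phi> c" for c
    using ineq[of c s0] Phi_p_nonneg[OF w, where p = p and \<phi> = \<phi> and c = c] unfolding Phi_c0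
    by (cases "Phi_p p w \<phi> c") auto
  show "\<xi>s \<bullet> (s - s0) \<le> R_tilde_s \<nu>1 \<nu>2 P s_calib R_s s - R_tilde_s \<nu>1 \<nu>2 P s_calib R_s s0" for s
    using ineq[of c0 s] unfolding Phi_c0 by simp
qed

lemma bregman_R_tilde:
  assumes "Phi_terms p w \<phi> c summable_on UNIV" "Phi_terms p w \<phi> c0 summable_on UNIV"
  shows "bregman (R_tilde p w \<phi> \<nu>1 \<nu>2 P s_calib R_s) (\<xi>c, \<xi>s) (c, s) (c0, s0)
    = ereal (infsum (Phi_terms p w \<phi> c) UNIV - infsum (Phi_terms p w \<phi> c0) UNIV - \<xi>c \<bullet> (c - c0)
        + (R_tilde_s \<nu>1 \<nu>2 P s_calib R_s s - R_tilde_s \<nu>1 \<nu>2 P s_calib R_s s0 - \<xi>s \<bullet> (s - s0)))"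
  using assms by (simp add: bregman_def R_tilde_def Phi_p_eq_infsum inner_diff_right)

lemma J_fun_le_imp_summable:
  assumes J: "J_fun B \<gamma> P s_calib p w \<phi> R_s u s_m \<alpha> \<beta> \<mu> c s \<le> J_fun B \<gamma> P s_calib p w \<phi> R_s u s_m \<alpha> \<beta> \<mu> c' s'"
    and \<alpha>: "0 < \<alpha>" and sum': "Phi_terms p w \<phi> c' summable_on UNIV"
  shows "Phi_terms p w \<phi> c summable_on UNIV"
    and "1/2 * (norm (B c s - u))\<^sup>2 + \<gamma>/2 * (norm (s - s_m))\<^sup>2 + \<mu>/2 * (norm (P s - s_calib))\<^sup>2
           + \<alpha> * infsum (Phi_terms p w \<phi> c) UNIV + \<beta> * R_s s
         \<le> 1/2 * (norm (B c' s' - u))\<^sup>2 + \<gamma>/2 * (norm (s' - s_m))\<^sup>2 + \<mu>/2 * (norm (P s' - s_calib))\<^sup>2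
           + \<alpha> * infsum (Phi_terms p w \<phi> c') UNIV + \<beta> * R_s s'"
proof -
  have J': "J_fun B \<gamma> P s_calib p w \<phi> R_s u s_m \<alpha> \<beta> \<mu> c' s' \<noteq> \<infinity>"
    using Phi_p_eq_infsum[OF sum'] by (simp add: J_fun_def)
  show sum: "Phi_terms p w \<phi> c summable_on UNIV"
  proof (rule ccontr)
    assume "\<not> ?thesis"
    then have "J_fun B \<gamma> P s_calib p w \<phi> R_s u s_m \<alpha> \<beta> \<mu> c s = \<infinity>"
      using \<alpha> by (simp add: J_fun_def Phi_p_def)
    then show False using J J' by simp
  qed
  show "1/2 * (norm (B c s - u))\<^sup>2 + \<gamma>/2 * (norm (s - s_m))\<^sup>2 + \<mu>/2 * (norm (P s - s_calib))\<^sup>2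
           + \<alpha> * infsum (Phi_terms p w \<phi> c) UNIV + \<beta> * R_s s
         \<le> 1/2 * (norm (B c' s' - u))\<^sup>2 + \<gamma>/2 * (norm (s' - s_m))\<^sup>2 + \<mu>/2 * (norm (P s' - s_calib))\<^sup>2
           + \<alpha> * infsum (Phi_terms p w \<phi> c') UNIV + \<beta> * R_s s'"
    using J by (simp add: J_fun_def Phi_p_eq_infsum[OF sum] Phi_p_eq_infsum[OF sum'])
qed

lemma square_sum_absorb:
  fixes c g x y :: real
  assumes "0 \<le> c" "c < g"
  shows "c * (x + y)\<^sup>2 - g * x\<^sup>2 \<le> (c + c\<^sup>2 / (g - c)) * y\<^sup>2"
proof -
  have "0 \<le> ((g - c) * x - c * y)\<^sup>2 / (g - c)" using assms by simp
  also have "\<dots> = (g - c) * x\<^sup>2 - 2 * c * x * y + c\<^sup>2 / (g - c) * y\<^sup>2"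
    using assms by (simp add: power2_eq_square field_simps)
  finally show ?thesis by (simp add: power2_eq_square algebra_simps)
qed

text \<open>The scalar core of the Bregman-distance rate: after testing minimality against the exact
  solution and inserting the source condition, Young's inequality absorbs the residual \<open>r\<close> and
  the model mismatch \<open>q\<close>; the restriction \<open>\<kappa>3 < \<gamma> / (2 \<alpha>_max)\<close> is what leaves a positive
  multiple of \<open>q\<^sup>2\<close> for this.\<close>
lemma tikhonov_bregman_rate:
  fixes r q nu ne bb z D L \<alpha> \<eta> :: real
  assumes minimality: "r\<^sup>2 / 2 + \<gamma> / 2 * q\<^sup>2 + \<alpha> * (D + L) \<le> nu\<^sup>2 / 2 + \<gamma> / 2 * ne\<^sup>2"
    and source: "- L \<le> \<kappa>1 * D + \<kappa>2 * bb + \<kappa>3 * z"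
    and bb: "bb \<le> r + nu" and z: "z \<le> (q + ne)\<^sup>2"
    and nonneg: "0 \<le> r" "0 \<le> q" "0 \<le> nu" "0 \<le> ne" "0 \<le> D"
    and noise: "nu \<le> \<eta>" "ne \<le> \<eta>"
    and \<alpha>: "0 < \<alpha>" "\<alpha> \<le> \<alpha>_max" "m * \<eta> \<le> \<alpha>" "\<alpha> \<le> M * \<eta>"
    and \<kappa>: "\<kappa>1 < 1" "0 \<le> \<kappa>2" "0 \<le> \<kappa>3" "\<kappa>3 < \<gamma> / (2 * \<alpha>_max)"
    and pos: "0 < m" "0 < \<gamma>" "0 < \<alpha>_max"
  shows "D \<le> (1/2 + \<gamma>/2 + M * \<kappa>2 + (M * \<kappa>2)\<^sup>2 / 2 + \<alpha>_max * \<kappa>3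
                + (\<alpha>_max * \<kappa>3)\<^sup>2 / (\<gamma>/2 - \<alpha>_max * \<kappa>3)) / (m * (1 - \<kappa>1)) * \<eta>"
proof -
  define c3 where "c3 = \<alpha>_max * \<kappa>3"
  define A where "A = \<gamma>/2 - c3"
  define K where "K = 1/2 + \<gamma>/2 + M * \<kappa>2 + (M * \<kappa>2)\<^sup>2 / 2 + c3 + c3\<^sup>2 / A"
  have "\<kappa>3 * (2 * \<alpha>_max) < \<gamma>" using \<kappa>(4) pos by (simp add: pos_less_divide_eq)
  then have A: "0 < A" unfolding A_def c3_def by (simp add: algebra_simps)
  have c3: "0 \<le> c3" "\<alpha> * \<kappa>3 \<le> c3" using \<kappa> \<alpha> unfolding c3_def by (auto intro: mult_right_mono)
  have "\<eta> \<noteq> 0" using \<alpha> by auto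
  then have \<eta>: "0 < \<eta>" using noise nonneg by linarith
  have "\<alpha> * (1 - \<kappa>1) * D \<le> nu\<^sup>2/2 + \<gamma>/2 * ne\<^sup>2 - r\<^sup>2/2 - \<gamma>/2 * q\<^sup>2 + \<alpha> * \<kappa>2 * bb + \<alpha> * \<kappa>3 * z"
    using minimality mult_left_mono[OF source, of \<alpha>] \<alpha>(1) by (simp add: algebra_simps)
  moreover have "\<alpha> * \<kappa>2 * bb - r\<^sup>2/2 \<le> \<alpha> * \<kappa>2 * nu + (\<alpha> * \<kappa>2)\<^sup>2 / 2"
  proof -
    have "\<alpha> * \<kappa>2 * bb \<le> \<alpha> * \<kappa>2 * (r + nu)" using bb \<alpha> \<kappa> by (intro mult_left_mono) auto
    moreover have "0 \<le> (r - \<alpha> * \<kappa>2)\<^sup>2" by simp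
    ultimately show ?thesis by (simp add: power2_eq_square algebra_simps)
  qed
  moreover have "\<alpha> * \<kappa>3 * z - \<gamma>/2 * q\<^sup>2 \<le> (c3 + c3\<^sup>2 / A) * ne\<^sup>2"
  proof -
    have "\<alpha> * \<kappa>3 * z \<le> \<alpha> * \<kappa>3 * (q + ne)\<^sup>2" using z \<alpha> \<kappa> by (intro mult_left_mono) auto
    also have "\<dots> \<le> c3 * (q + ne)\<^sup>2" using c3 by (intro mult_right_mono) auto
    finally show ?thesis using square_sum_absorb[of c3 "\<gamma>/2" q ne] A c3 unfolding A_def by simp
  qed
  moreover have "\<alpha> * \<kappa>2 * nu \<le> M * \<kappa>2 * \<eta>\<^sup>2"
  proof -
    have "\<alpha> * nu \<le> (M * \<eta>) * \<eta>" using \<alpha> noise nonneg by (intro mult_mono) auto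
    then have "\<kappa>2 * (\<alpha> * nu) \<le> \<kappa>2 * ((M * \<eta>) * \<eta>)" using \<kappa> by (intro mult_left_mono)
    then show ?thesis by (simp add: power2_eq_square algebra_simps)
  qed
  moreover have "(\<alpha> * \<kappa>2)\<^sup>2 / 2 \<le> (M * \<kappa>2)\<^sup>2 / 2 * \<eta>\<^sup>2"
  proof -
    have "\<alpha>\<^sup>2 \<le> (M * \<eta>)\<^sup>2" using \<alpha> by (intro power_mono) auto
    then have "\<alpha>\<^sup>2 * \<kappa>2\<^sup>2 \<le> (M * \<eta>)\<^sup>2 * \<kappa>2\<^sup>2" by (intro mult_right_mono) auto
    then show ?thesis by (simp add: power_mult_distrib algebra_simps)
  qed
  moreover have "nu\<^sup>2 \<le> \<eta>\<^sup>2" "ne\<^sup>2 \<le> \<eta>\<^sup>2" using noise nonneg by (auto intro: power_mono)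
  moreover have "(c3 + c3\<^sup>2 / A) * ne\<^sup>2 \<le> (c3 + c3\<^sup>2 / A) * \<eta>\<^sup>2"
    using \<open>ne\<^sup>2 \<le> \<eta>\<^sup>2\<close> A c3 by (intro mult_left_mono) auto
  moreover have "\<gamma>/2 * ne\<^sup>2 \<le> \<gamma>/2 * \<eta>\<^sup>2" using \<open>ne\<^sup>2 \<le> \<eta>\<^sup>2\<close> pos by simp
  moreover have "K * \<eta>\<^sup>2 = \<eta>\<^sup>2/2 + \<gamma>/2 * \<eta>\<^sup>2 + M * \<kappa>2 * \<eta>\<^sup>2 + (M * \<kappa>2)\<^sup>2 / 2 * \<eta>\<^sup>2
                              + (c3 + c3\<^sup>2 / A) * \<eta>\<^sup>2"
    unfolding K_def by (simp add: algebra_simps)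
  moreover have "0 \<le> r\<^sup>2/2" "0 \<le> \<gamma>/2 * q\<^sup>2" using pos by auto
  ultimately have "\<alpha> * (1 - \<kappa>1) * D \<le> K * \<eta>\<^sup>2" by linarith
  moreover have "m * \<eta> * (1 - \<kappa>1) * D \<le> \<alpha> * (1 - \<kappa>1) * D"
    using \<alpha>(3) \<kappa>(1) nonneg(5) by (intro mult_right_mono) auto
  ultimately have "\<eta> * (m * (1 - \<kappa>1) * D) \<le> \<eta> * (K * \<eta>)"
    by (simp add: power2_eq_square algebra_simps)
  then have "D * (m * (1 - \<kappa>1)) \<le> K * \<eta>" using \<eta> by (simp add: mult.commute)
  then have "D \<le> K * \<eta> / (m * (1 - \<kappa>1))" using pos \<kappa>(1) by (simp add: pos_le_divide_eq)
  then show ?thesis unfolding K_def c3_def A_def by simp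
qed

locale sparsity_rate_setting =
  fixes B :: "'x::real_inner \<Rightarrow> 'y::real_inner \<Rightarrow> 'z::real_inner"
    and \<gamma> :: real and P :: "'y \<Rightarrow> 'y" and s_calib :: 'y
    and p :: real and w :: "'i \<Rightarrow> real" and \<phi> :: "'i \<Rightarrow> 'x"
    and R_s :: "'y \<Rightarrow> real" and \<nu>1 \<nu>2 :: real
    and c_star :: 'x and s_star :: 'y and \<xi>c :: 'x and \<xi>s :: 'y
    and \<kappa>1 \<kappa>2 \<kappa>3 \<alpha>_max m M :: real
  assumes onb: "orthonormal_basis \<phi>"
    and w_ge1: "\<And>i. 1 \<le> w i"
    and p: "1 < p" "p \<le> 2"
    and \<gamma>_pos: "0 < \<gamma>"
    and \<nu>_nonneg: "0 \<le> \<nu>1" "0 \<le> \<nu>2"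
    and R_s_nonneg: "\<And>y. 0 \<le> R_s y"
    and subgrad: "subgradient (R_tilde p w \<phi> \<nu>1 \<nu>2 P s_calib R_s) (c_star, s_star) (\<xi>c, \<xi>s)"
    and source: "\<And>c s. ereal ((\<xi>c, \<xi>s) \<bullet> ((c_star, s_star) - (c, s)))
        \<le> ereal \<kappa>1 * bregman (R_tilde p w \<phi> \<nu>1 \<nu>2 P s_calib R_s) (\<xi>c, \<xi>s) (c, s) (c_star, s_star)
           + ereal (\<kappa>2 * norm (B c s - B c_star s_star) + \<kappa>3 * (norm (s - s_star))\<^sup>2)"
    and \<alpha>_max_pos: "0 < \<alpha>_max"
    and \<kappa>: "\<kappa>1 < 1" "0 \<le> \<kappa>2" "0 \<le> \<kappa>3" "\<kappa>3 < \<gamma> / (2 * \<alpha>_max)"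
    and m_pos: "0 < m"
begin

abbreviation "Phi_sum c \<equiv> infsum (Phi_terms p w \<phi> c) UNIV"
abbreviation "Rs \<equiv> R_tilde_s \<nu>1 \<nu>2 P s_calib R_s"

definition "Phi_bound = (1 + \<gamma>) / (2 * m) + Phi_sum c_star + Rs s_star"

definition "coeff_bound = max 1 Phi_bound"

definition "rate_const = (1/2 + \<gamma>/2 + M * \<kappa>2 + (M * \<kappa>2)\<^sup>2 / 2 + \<alpha>_max * \<kappa>3
                + (\<alpha>_max * \<kappa>3)\<^sup>2 / (\<gamma>/2 - \<alpha>_max * \<kappa>3)) / (m * (1 - \<kappa>1))"

definition "error_const = rate_const / midpoint_gap_const p coeff_bound"

lemma w_nonneg: "0 \<le> w i"
  using w_ge1[of i] by linarith

lemma Rs_nonneg: "0 \<le> Rs s"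
  using \<nu>_nonneg R_s_nonneg[of s] by simp

lemmas summable_star = subgradient_R_tilde_D(1)[OF w_nonneg subgrad]
  and Phi_subgradient = subgradient_R_tilde_D(2)[OF w_nonneg subgrad]
  and Rs_subgradient = subgradient_R_tilde_D(3)[OF w_nonneg subgrad]

lemma gap_const_pos: "0 < midpoint_gap_const p coeff_bound"
  using midpoint_gap_const_pos[OF p(1)] by (simp add: coeff_bound_def)

lemma coeff_star_le: "\<bar>c_star \<bullet> \<phi> i\<bar> \<le> coeff_bound"
proof -
  have "0 \<le> (1 + \<gamma>) / (2 * m)" using \<gamma>_pos m_pos by simp
  then have "Phi_sum c_star \<le> Phi_bound" using Rs_nonneg[of s_star] by (simp add: Phi_bound_def)
  then show ?thesis
    using abs_coeff_le_Phi_p[OF summable_star w_ge1, of i] p by (simp add: coeff_bound_def)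
qed

end

locale sparsity_rate_data = sparsity_rate_setting +
  fixes \<delta> \<epsilon> :: real and u_\<delta> s_mod and \<alpha> :: real and c_\<alpha> s_\<alpha>
  assumes noise_lt1: "\<delta> + \<epsilon> < 1"
    and u_noise: "norm (B c_star s_star - u_\<delta>) \<le> \<delta>"
    and s_noise: "norm (s_star - s_mod) \<le> \<epsilon>"
    and \<alpha>: "0 < \<alpha>" "\<alpha> \<le> \<alpha>_max" "m * (\<delta> + \<epsilon>) \<le> \<alpha>" "\<alpha> \<le> M * (\<delta> + \<epsilon>)"
    and minimizer: "\<And>c s. J_fun B \<gamma> P s_calib p w \<phi> R_s u_\<delta> s_mod \<alpha> (\<nu>1 * \<alpha>) (\<nu>2 * \<alpha>) c_\<alpha> s_\<alpha>
                          \<le> J_fun B \<gamma> P s_calib p w \<phi> R_s u_\<delta> s_mod \<alpha> (\<nu>1 * \<alpha>) (\<nu>2 * \<alpha>) c s"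
begin

lemmas summable_\<alpha> = J_fun_le_imp_summable(1)[OF minimizer \<alpha>(1) summable_star]

lemma minimality:
  "(norm (B c_\<alpha> s_\<alpha> - u_\<delta>))\<^sup>2 / 2 + \<gamma> / 2 * (norm (s_\<alpha> - s_mod))\<^sup>2 + \<alpha> * (Phi_sum c_\<alpha> + Rs s_\<alpha>)
   \<le> (norm (B c_star s_star - u_\<delta>))\<^sup>2 / 2 + \<gamma> / 2 * (norm (s_star - s_mod))\<^sup>2
      + \<alpha> * (Phi_sum c_star + Rs s_star)"
  using J_fun_le_imp_summable(2)[OF minimizer \<alpha>(1) summable_star] by (simp add: algebra_simps)

lemma noise_nonneg: "0 \<le> \<delta>" "0 \<le> \<epsilon>"
  using u_noise s_noise norm_ge_zero[of "B c_star s_star - u_\<delta>"] norm_ge_zero[of "s_star - s_mod"]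
  by linarith+

text \<open>The bound on \<open>\<Phi>\<^sub>p(c\<^sub>\<alpha>)\<close> is uniform in the data because \<open>(\<delta> + \<epsilon>)\<^sup>2 \<le> \<delta> + \<epsilon> \<le> \<alpha> / m\<close>
  for \<open>\<delta> + \<epsilon> < 1\<close>; it bounds all coefficients of \<open>c\<^sub>\<alpha>\<close> and thereby the constant in the
  uniform convexity of \<open>\<Phi>\<^sub>p\<close>.\<close>
lemma Phi_\<alpha>_le_bound: "Phi_sum c_\<alpha> \<le> Phi_bound"
proof -
  define \<eta> where "\<eta> = \<delta> + \<epsilon>"
  have \<eta>: "0 \<le> \<eta>" "\<eta> < 1" using noise_nonneg noise_lt1 by (auto simp: \<eta>_def)
  have "\<eta>\<^sup>2 \<le> \<eta>" using \<eta> by (simp add: power2_eq_square mult_left_le_one_le)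
  also have "\<eta> \<le> \<alpha> / m" using \<alpha>(3) m_pos by (simp add: \<eta>_def pos_le_divide_eq mult.commute)
  finally have \<eta>_sq: "\<eta>\<^sup>2 \<le> \<alpha> / m" .
  have "(norm (B c_star s_star - u_\<delta>))\<^sup>2 \<le> \<eta>\<^sup>2" "(norm (s_star - s_mod))\<^sup>2 \<le> \<eta>\<^sup>2"
    using u_noise s_noise noise_nonneg by (auto simp: \<eta>_def intro!: power_mono)
  moreover from this(2) have "\<gamma> / 2 * (norm (s_star - s_mod))\<^sup>2 \<le> \<gamma> / 2 * \<eta>\<^sup>2"
    using \<gamma>_pos by (intro mult_left_mono) auto
  moreover have "(1 + \<gamma>) / 2 * \<eta>\<^sup>2 = \<eta>\<^sup>2 / 2 + \<gamma> / 2 * \<eta>\<^sup>2" by (simp add: algebra_simps)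
  ultimately have "(norm (B c_star s_star - u_\<delta>))\<^sup>2 / 2 + \<gamma> / 2 * (norm (s_star - s_mod))\<^sup>2
      \<le> (1 + \<gamma>) / 2 * \<eta>\<^sup>2" by linarith
  also have "\<dots> \<le> (1 + \<gamma>) / 2 * (\<alpha> / m)" using \<eta>_sq \<gamma>_pos by (intro mult_left_mono) auto
  finally have noise_terms: "(norm (B c_star s_star - u_\<delta>))\<^sup>2 / 2 + \<gamma> / 2 * (norm (s_star - s_mod))\<^sup>2
      \<le> \<alpha> * ((1 + \<gamma>) / (2 * m))" by (simp add: mult.commute)
  have "0 \<le> \<alpha> * Rs s_\<alpha>" using \<alpha>(1) Rs_nonneg[of s_\<alpha>] by simp
  moreover have "0 \<le> \<gamma> / 2 * (norm (s_\<alpha> - s_mod))\<^sup>2" using \<gamma>_pos by simp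
  moreover have "\<alpha> * Phi_bound = \<alpha> * ((1 + \<gamma>) / (2 * m)) + \<alpha> * (Phi_sum c_star + Rs s_star)"
    by (simp add: Phi_bound_def algebra_simps)
  ultimately have "\<alpha> * Phi_sum c_\<alpha> \<le> \<alpha> * Phi_bound"
    using noise_terms minimality zero_le_power2[of "norm (B c_\<alpha> s_\<alpha> - u_\<delta>)"]
      distrib_left[of \<alpha> "Phi_sum c_\<alpha>" "Rs s_\<alpha>"] by linarith
  then show ?thesis using \<alpha>(1) by simp
qed

lemma coeff_\<alpha>_le: "\<bar>c_\<alpha> \<bullet> \<phi> i\<bar> \<le> coeff_bound"
  using abs_coeff_le_Phi_p[OF summable_\<alpha> w_ge1, of i] p Phi_\<alpha>_le_bound
  by (simp add: coeff_bound_def)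

abbreviation "D_Phi \<equiv> Phi_sum c_\<alpha> - Phi_sum c_star - \<xi>c \<bullet> (c_\<alpha> - c_star)"
abbreviation "D_Rs \<equiv> Rs s_\<alpha> - Rs s_star - \<xi>s \<bullet> (s_\<alpha> - s_star)"

lemma bregman_Phi_lower_bound: "midpoint_gap_const p coeff_bound * (norm (c_\<alpha> - c_star))\<^sup>2 \<le> D_Phi"
  by (rule Phi_p_bregman_lower_bound[OF onb w_ge1 p summable_\<alpha> summable_star coeff_\<alpha>_le
        coeff_star_le Phi_subgradient])

lemma bregman_rate: "D_Phi + D_Rs \<le> rate_const * (\<delta> + \<epsilon>)"
  unfolding rate_const_def
proof (rule tikhonov_bregman_rate[where \<alpha> = \<alpha> and r = "norm (B c_\<alpha> s_\<alpha> - u_\<delta>)"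
      and q = "norm (s_\<alpha> - s_mod)" and nu = "norm (B c_star s_star - u_\<delta>)" and ne = "norm (s_star - s_mod)"])
  show "- (\<xi>c \<bullet> (c_\<alpha> - c_star) + \<xi>s \<bullet> (s_\<alpha> - s_star))
      \<le> \<kappa>1 * (D_Phi + D_Rs) + \<kappa>2 * norm (B c_\<alpha> s_\<alpha> - B c_star s_star) + \<kappa>3 * (norm (s_\<alpha> - s_star))\<^sup>2"
  proof -
    have "bregman (R_tilde p w \<phi> \<nu>1 \<nu>2 P s_calib R_s) (\<xi>c, \<xi>s) (c_\<alpha>, s_\<alpha>) (c_star, s_star)
        = ereal (D_Phi + D_Rs)"
      using bregman_R_tilde[OF summable_\<alpha> summable_star] by simp
    moreover have "(\<xi>c, \<xi>s) \<bullet> ((c_star, s_star) - (c_\<alpha>, s_\<alpha>))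
        = - (\<xi>c \<bullet> (c_\<alpha> - c_star) + \<xi>s \<bullet> (s_\<alpha> - s_star))"
      by (simp add: inner_diff_right)
    ultimately show ?thesis using source[of c_\<alpha> s_\<alpha>] by simp
  qed
  show "norm (B c_\<alpha> s_\<alpha> - B c_star s_star) \<le> norm (B c_\<alpha> s_\<alpha> - u_\<delta>) + norm (B c_star s_star - u_\<delta>)"
    by (rule norm_diff_triangle_le[OF order.refl]) (simp add: norm_minus_commute)
  show "(norm (s_\<alpha> - s_star))\<^sup>2 \<le> (norm (s_\<alpha> - s_mod) + norm (s_star - s_mod))\<^sup>2"
    by (intro power_mono norm_diff_triangle_le[OF order.refl]) (auto simp: norm_minus_commute)
  show "0 \<le> D_Phi + D_Rs"
    using bregman_Phi_lower_bound Rs_subgradient[of s_\<alpha>]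
      mult_nonneg_nonneg[OF less_imp_le[OF gap_const_pos] zero_le_power2[of "norm (c_\<alpha> - c_star)"]]
    by linarith
  show "(norm (B c_\<alpha> s_\<alpha> - u_\<delta>))\<^sup>2 / 2 + \<gamma> / 2 * (norm (s_\<alpha> - s_mod))\<^sup>2
      + \<alpha> * (D_Phi + D_Rs + (\<xi>c \<bullet> (c_\<alpha> - c_star) + \<xi>s \<bullet> (s_\<alpha> - s_star)))
    \<le> (norm (B c_star s_star - u_\<delta>))\<^sup>2 / 2 + \<gamma> / 2 * (norm (s_star - s_mod))\<^sup>2"
    using minimality by (simp add: algebra_simps)
qed (use u_noise s_noise noise_nonneg \<alpha> \<kappa> \<gamma>_pos m_pos \<alpha>_max_pos in auto)

lemma error_bound: "norm (c_\<alpha> - c_star) \<le> sqrt error_const * sqrt (\<delta> + \<epsilon>)"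
proof -
  have "midpoint_gap_const p coeff_bound * (norm (c_\<alpha> - c_star))\<^sup>2 \<le> rate_const * (\<delta> + \<epsilon>)"
    using bregman_Phi_lower_bound bregman_rate Rs_subgradient[of s_\<alpha>] by linarith
  then have "(norm (c_\<alpha> - c_star))\<^sup>2 \<le> error_const * (\<delta> + \<epsilon>)"
    using gap_const_pos by (simp add: error_const_def pos_le_divide_eq mult.commute)
  then have "norm (c_\<alpha> - c_star) \<le> sqrt (error_const * (\<delta> + \<epsilon>))" by (rule real_le_rsqrt)
  then show ?thesis by (simp add: real_sqrt_mult)
qed

end

theorem mainTheorem13:
  fixes B :: "'x::{real_inner,complete_space} \<Rightarrow> 'y::{real_inner,complete_space} \<Rightarrow> 'z::{real_inner,complete_space}"
    and C :: real
    and P :: "'y \<Rightarrow> 'y" and Yn :: "'y set" and s_calib :: 'y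
    and R_s :: "'y \<Rightarrow> real"
    and \<phi> :: "'i \<Rightarrow> 'x" and w :: "'i \<Rightarrow> real" and p :: real
    and \<gamma> \<nu>1 \<nu>2 :: real
    and c_star :: 'x and s_star :: 'y and u_star :: 'z
    and \<kappa>1 \<kappa>2 \<kappa>3 \<alpha>_max m M :: real
    and \<xi>_star :: "'x \<times> 'y"
  assumes B_bilinear: "bilinear B"
    and B_bound: "\<forall>c s. norm (B c s) \<le> C * norm c * norm s"
    and B_weak: "seq_weak_weak_cont2 B"
    and P_lin: "bounded_linear P"
    and Yn_fin: "subspace Yn" "\<exists>S. finite S \<and> span S = Yn"
    and P_range: "\<forall>y. P y \<in> Yn"
    and s_calib_in: "s_calib \<in> Yn"
    and R_s_nonneg: "\<forall>y. R_s y \<ge> 0"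
    and R_s_convex: "convex_on UNIV R_s"
    and R_s_wlsc: "weakly_lsc R_s"
    and \<phi>_onb: "orthonormal_basis \<phi>"
    and w_bounds: "\<forall>i. 1 \<le> w i"
    and p_bounds: "1 < p" "p \<le> 2"
    and \<gamma>_pos: "\<gamma> > 0"
    and \<nu>_pos: "\<nu>1 > 0" "\<nu>2 > 0"
    and u_star_def: "u_star = B c_star s_star"
    and c_star_min: "\<forall>c. B c s_star = u_star \<longrightarrow> Phi_p p w \<phi> c_star \<le> Phi_p p w \<phi> c"
    and \<alpha>_max_pos: "\<alpha>_max > 0"
    and \<kappa>_bounds: "0 \<le> \<kappa>1" "\<kappa>1 < 1" "0 \<le> \<kappa>2" "0 \<le> \<kappa>3" "\<kappa>3 < min 1 (\<gamma> / (2 * \<alpha>_max))"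
    and \<xi>_subgrad: "subgradient (R_tilde p w \<phi> \<nu>1 \<nu>2 P s_calib R_s) (c_star, s_star) \<xi>_star"
    and source_cond: "\<forall>c s. ereal (\<xi>_star \<bullet> ((c_star, s_star) - (c, s)))
        \<le> ereal \<kappa>1 * bregman (R_tilde p w \<phi> \<nu>1 \<nu>2 P s_calib R_s) \<xi>_star (c, s) (c_star, s_star)
           + ereal (\<kappa>2 * norm (B c s - B c_star s_star) + \<kappa>3 * (norm (s - s_star))\<^sup>2)"
    and mM: "0 < m" "m \<le> M"
  shows "\<exists>K \<delta>0. \<delta>0 > 0 \<and>
     (\<forall>\<delta> \<epsilon> u_\<delta> s_mod \<alpha> c_\<alpha> s_\<alpha>.
        \<delta> + \<epsilon> < \<delta>0 \<longrightarrow>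
        norm (u_star - u_\<delta>) \<le> \<delta> \<longrightarrow>
        norm (s_star - s_mod) \<le> \<epsilon> \<longrightarrow>
        0 < \<alpha> \<longrightarrow> \<alpha> \<le> \<alpha>_max \<longrightarrow>
        m * (\<delta> + \<epsilon>) \<le> \<alpha> \<longrightarrow> \<alpha> \<le> M * (\<delta> + \<epsilon>) \<longrightarrow>
        (\<forall>c s. J_fun B \<gamma> P s_calib p w \<phi> R_s u_\<delta> s_mod \<alpha> (\<nu>1 * \<alpha>) (\<nu>2 * \<alpha>) c_\<alpha> s_\<alpha>
               \<le> J_fun B \<gamma> P s_calib p w \<phi> R_s u_\<delta> s_mod \<alpha> (\<nu>1 * \<alpha>) (\<nu>2 * \<alpha>) c s) \<longrightarrow>
        norm (c_\<alpha> - c_star) \<le> K * sqrt (\<delta> + \<epsilon>))"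
proof -
  obtain \<xi>c \<xi>s where \<xi>: "\<xi>_star = (\<xi>c, \<xi>s)" by fastforce
  interpret sparsity_rate_setting B \<gamma> P s_calib p w \<phi> R_s \<nu>1 \<nu>2 c_star s_star \<xi>c \<xi>s \<kappa>1 \<kappa>2 \<kappa>3 \<alpha>_max m M
    using \<phi>_onb w_bounds p_bounds \<gamma>_pos \<nu>_pos R_s_nonneg \<xi>_subgrad source_cond \<alpha>_max_pos \<kappa>_bounds mM
    by unfold_locales (auto simp: \<xi>)
  have "norm (c_\<alpha> - c_star) \<le> sqrt error_const * sqrt (\<delta> + \<epsilon>)"
    if "\<delta> + \<epsilon> < 1" "norm (u_star - u_\<delta>) \<le> \<delta>" "norm (s_star - s_mod) \<le> \<epsilon>"
      "0 < \<alpha>" "\<alpha> \<le> \<alpha>_max" "m * (\<delta> + \<epsilon>) \<le> \<alpha>" "\<alpha> \<le> M * (\<delta> + \<epsilon>)"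
      "\<forall>c s. J_fun B \<gamma> P s_calib p w \<phi> R_s u_\<delta> s_mod \<alpha> (\<nu>1 * \<alpha>) (\<nu>2 * \<alpha>) c_\<alpha> s_\<alpha>
               \<le> J_fun B \<gamma> P s_calib p w \<phi> R_s u_\<delta> s_mod \<alpha> (\<nu>1 * \<alpha>) (\<nu>2 * \<alpha>) c s"
    for \<delta> \<epsilon> u_\<delta> s_mod \<alpha> c_\<alpha> s_\<alpha>
  proof -
    interpret sparsity_rate_data B \<gamma> P s_calib p w \<phi> R_s \<nu>1 \<nu>2 c_star s_star \<xi>c \<xi>s
        \<kappa>1 \<kappa>2 \<kappa>3 \<alpha>_max m M \<delta> \<epsilon> u_\<delta> s_mod \<alpha> c_\<alpha> s_\<alpha>
      using that by unfold_locales (auto simp: u_star_def)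
    show ?thesis by (rule error_bound)
  qed
  then show ?thesis by (intro exI[of _ "sqrt error_const"] exI[of _ "1::real"]) auto
qed

end
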